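(* Let $m\ge 2$, $k\ge1$, $b=k(m^2-m)$, $d=k(m^2-1)$, and for $0\le i\le d-1$ let $f_i$ be the coefficient of $x^{i+1}$ in $\big(\sum_{j=0}^{m-1}\binom{m}{j}x^j\big)^{k}(1+x)^{b}$. Then, with $S$ graded by total degree, the Hilbert polynomial of $S/\mathcal I^{m,m}_{m,k}$ is $$H(n)=\sum_{i=0}^{d-1}f_i\binom{n-1}{i}.$$ In particular the (projective) dimension of the variety defined by $\mathcal I^{m,m}_{m,k}$ is $k(m^2-1)-1$ and its degree is $m^k$.
   Context: Let $F$ be an algebraically closed field, $S=F[x^{(l)}_{i,j}:1\le i,j\le m,\ 0\le l\le k-1]$, and $X(t)$ the $m\times m$ matrix over $S[t]/(t^k)$ with entries $x_{i,j}(t)=\sum_{l=0}^{k-1}x^{(l)}_{i,j}t^l$; every element of $S[t]/(t^k)$ is uniquely $\sum_{l=0}^{k-1}c_lt^l$, $c_l\in S$. $\mathcal I^{m,m}_{m,k}$ is the ideal of $S$ generated by the coefficients of all powers of $t$ of $\det X(t)$ (these coefficients are homogeneous of degree $m$). *)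

theory Defs
  imports "HOL-Library.Poly_Mapping" "HOL-Computational_Algebra.Polynomial"
    "Jordan_Normal_Form.Determinant"
begin

text \<open>Variables x^(l)_{i,j} are indexed by triples (i,j,l).  The polynomial ring
 S = F[x] is represented as finitely supported maps from monomials (finitely supported
 exponent vectors) to coefficients.\<close>

type_synonym 'a mpoly = "((nat \<times> nat \<times> nat) \<Rightarrow>\<^sub>0 nat) \<Rightarrow>\<^sub>0 'a"

definition var :: "nat \<Rightarrow> nat \<Rightarrow> nat \<Rightarrow> 'a::comm_ring_1 mpoly" where
  "var i j l = Poly_Mapping.single (Poly_Mapping.single (i, j, l) 1) 1"

definition mon_deg :: "((nat \<times> nat \<times> nat) \<Rightarrow>\<^sub>0 nat) \<Rightarrow> nat" where
  "mon_deg \<alpha> = sum (Poly_Mapping.lookup \<alpha>) (Poly_Mapping.keys \<alpha>)"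

definition mscale :: "'a::field \<Rightarrow> 'a mpoly \<Rightarrow> 'a mpoly" where
  "mscale c p = Poly_Mapping.map ((*) c) p"

text \<open>The matrix X(t), entries in S[t]; reduction modulo t^k is a ring homomorphism,
 so the coefficients of t^l (l < k) of det X(t) in S[t]/(t^k) are the coefficients
 of t^l (l<k) of the determinant computed in S[t].\<close>
definition Xmat :: "nat \<Rightarrow> nat \<Rightarrow> 'a::comm_ring_1 mpoly poly mat" where
  "Xmat m k = mat m m (\<lambda>(i, j). (\<Sum>l<k. monom (var i j l) l))"

definition det_coeffs :: "nat \<Rightarrow> nat \<Rightarrow> 'a::comm_ring_1 mpoly set" where
  "det_coeffs m k = {coeff (det (Xmat m k)) l | l. l < k}"

definition ideal_gen :: "'b::comm_ring_1 set \<Rightarrow> 'b set" where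
  "ideal_gen G = {\<Sum>g\<in>A. c g * g | A c. finite A \<and> A \<subseteq> G}"

definition I_ideal :: "nat \<Rightarrow> nat \<Rightarrow> 'a::comm_ring_1 mpoly set" where
  "I_ideal m k = ideal_gen (det_coeffs m k)"

definition hom_part :: "nat \<Rightarrow> nat \<Rightarrow> nat \<Rightarrow> 'a::comm_ring_1 mpoly set" where
  "hom_part m k n = {p. \<forall>\<alpha>\<in>Poly_Mapping.keys p. mon_deg \<alpha> = n \<and>
      (\<forall>(i, j, l)\<in>Poly_Mapping.keys \<alpha>. i < m \<and> j < m \<and> l < k)}"

text \<open>Hilbert function of S/I: dim_F (S_n / I_n) = dim_F S_n - dim_F (I \<inter> S_n).\<close>
definition hilbert_fun :: "'a::field itself \<Rightarrow> nat \<Rightarrow> nat \<Rightarrow> nat \<Rightarrow> nat" where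
  "hilbert_fun _ m k n =
     vector_space.dim (mscale :: 'a \<Rightarrow> 'a mpoly \<Rightarrow> 'a mpoly) (hom_part m k n)
     - vector_space.dim (mscale :: 'a \<Rightarrow> 'a mpoly \<Rightarrow> 'a mpoly) (I_ideal m k \<inter> hom_part m k n)"

definition fcoeff :: "nat \<Rightarrow> nat \<Rightarrow> nat \<Rightarrow> nat" where
  "fcoeff m k i = coeff ((\<Sum>j<m. monom (m choose j) j) ^ k * [:1, 1:] ^ (k * (m^2 - m))) (i + 1)"

end

theory Submission
  imports Defs "HOL-Library.FuncSet" "HOL-Library.Multiset"
begin

text \<open>
  Give the variable x^(a)_(i,j) the weight (m a + j - i)^2. The coefficient g_l of t^l in
  det X(t) is a signed sum of the monomials prod_i x^(f i)_(i,\<sigma> i) with sum_i f i = l, one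
  for each permutation \<sigma> and each such f. The numbers m f(i) + \<sigma>(i) - i sum to m l, so such
  a monomial weighs at least m l^2, with equality for exactly one of them: the product L_l of
  the m variables x^((i+l) div m)_(i,(i+l) mod m). The supports of L_0, ..., L_(k-1) are
  pairwise disjoint.

  Replacing x^(L_j) by g_j minus heavier terms shows that in every degree the products
  x^\<mu> g_l, with \<mu> divisible by no L_j for j < l, span the degree part of the ideal; their
  lightest monomials \<mu> L_l are pairwise distinct, so they are a basis. Hence the Hilbert
  function counts the monomials of degree n divisible by no L_l. There are C(n-1, |A|-1)
  monomials of degree n with support A, and the supports containing no block are counted by
  (sum_(j<m) C(m,j) x^j)^k (1+x)^(k(m^2-m)): one factor for each block, one for each of the
  remaining variables.
\<close>

type_synonym mon = "(nat \<times> nat \<times> nat) \<Rightarrow>\<^sub>0 nat"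

abbreviation lookup :: "('v \<Rightarrow>\<^sub>0 'b::zero) \<Rightarrow> 'v \<Rightarrow> 'b" where
  "lookup \<equiv> Poly_Mapping.lookup"

abbreviation keys :: "('v \<Rightarrow>\<^sub>0 'b::zero) \<Rightarrow> 'v set" where
  "keys \<equiv> Poly_Mapping.keys"

abbreviation single :: "'v \<Rightarrow> 'b::zero \<Rightarrow> 'v \<Rightarrow>\<^sub>0 'b" where
  "single \<equiv> Poly_Mapping.single"

section \<open>Polynomials as a vector space over the coefficients\<close>

lemma lookup_mscale [simp]: "lookup (mscale c p) \<alpha> = c * lookup p \<alpha>"
  by (simp add: mscale_def Poly_Mapping.map.rep_eq when_def)

lemma mscale_eq_mult: "mscale c p = single 0 c * p"
  by (simp add: mscale_def mult_map_scale_conv_mult)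

global_interpretation vs: vector_space "mscale :: 'a::field \<Rightarrow> 'a mpoly \<Rightarrow> 'a mpoly"
  by unfold_locales (simp_all add: poly_mapping_eq_iff fun_eq_iff lookup_add algebra_simps)

lemma mscale_mult_left: "mscale c p * q = mscale c (p * q)"
  by (simp add: mscale_eq_mult mult.assoc)

lemma mscale_mult_right: "p * mscale c q = mscale c (p * q)"
  by (simp add: mscale_eq_mult mult.left_commute)

lemma mscale_single: "mscale c (single \<alpha> 1) = single \<alpha> c"
  by (rule poly_mapping_eqI) (simp add: lookup_single when_def)

lemma sum_single_lookup: "(\<Sum>\<alpha>\<in>keys p. single \<alpha> (lookup p \<alpha>)) = p"
  by (rule poly_mapping_eqI) (simp add: lookup_sum lookup_single when_def in_keys_iff)

lemma mult_eq_sum_mscale: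
  "(p :: 'a::field mpoly) * q = (\<Sum>\<nu>\<in>keys p. mscale (lookup p \<nu>) (single \<nu> 1 * q))"
proof -
  have "p * q = (\<Sum>\<nu>\<in>keys p. mscale (lookup p \<nu>) (single \<nu> 1)) * q"
    by (simp add: mscale_single sum_single_lookup)
  then show ?thesis
    by (simp add: sum_distrib_right mscale_mult_left)
qed

lemma mult_in_span:
  assumes "\<And>\<nu>. \<nu> \<in> keys p \<Longrightarrow> single \<nu> 1 * q \<in> vs.span B"
  shows "(p :: 'a::field mpoly) * q \<in> vs.span B"
  unfolding mult_eq_sum_mscale[of p] by (intro vs.span_sum vs.span_scale assms)

lemma subspace_keys_subset: "vs.subspace {p :: 'a::field mpoly. keys p \<subseteq> B}"
proof -
  have "keys (p + q) \<subseteq> B" if "keys p \<subseteq> B" "keys q \<subseteq> B" for p q :: "'a mpoly"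
    using keys_add[of p q] that by blast
  moreover have "keys (mscale c p) \<subseteq> B" if "keys p \<subseteq> B" for c and p :: "'a mpoly"
    using that by (auto simp: in_keys_iff)
  ultimately show ?thesis
    unfolding vs.subspace_def by simp
qed

lemma span_single_one: "vs.span ((\<lambda>\<alpha>. single \<alpha> (1::'a::field)) ` B) = {p. keys p \<subseteq> B}"
proof
  show "vs.span ((\<lambda>\<alpha>. single \<alpha> (1::'a)) ` B) \<subseteq> {p. keys p \<subseteq> B}"
    by (rule vs.span_minimal) (auto simp: subspace_keys_subset)
  show "{p. keys p \<subseteq> B} \<subseteq> vs.span ((\<lambda>\<alpha>. single \<alpha> (1::'a)) ` B)"
  proof
    fix p :: "'a mpoly"
    assume "p \<in> {p. keys p \<subseteq> B}"
    then have "(\<Sum>\<alpha>\<in>keys p. mscale (lookup p \<alpha>) (single \<alpha> 1)) \<in> vs.span ((\<lambda>\<alpha>. single \<alpha> 1) ` B)"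
      by (intro vs.span_sum vs.span_scale vs.span_base) auto
    then show "p \<in> vs.span ((\<lambda>\<alpha>. single \<alpha> 1) ` B)"
      by (simp add: mscale_single sum_single_lookup)
  qed
qed

lemma triangular_inj_on:
  fixes h :: "'i \<Rightarrow> 'a::zero mpoly" and lt :: "'i \<Rightarrow> mon" and C :: "mon \<Rightarrow> 'b::linorder"
  assumes inj: "inj_on lt I"
    and lead: "\<And>i. i \<in> I \<Longrightarrow> lookup (h i) (lt i) \<noteq> 0"
    and lighter: "\<And>i \<beta>. i \<in> I \<Longrightarrow> \<beta> \<in> keys (h i) \<Longrightarrow> \<beta> \<noteq> lt i \<Longrightarrow> C (lt i) < C \<beta>"
  shows "inj_on h I"
proof (rule inj_onI, rule ccontr)
  fix i j
  assume i: "i \<in> I" and j: "j \<in> I" and eq: "h i = h j" and "i \<noteq> j"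
  then have "lt i \<noteq> lt j"
    using inj by (auto dest: inj_onD)
  moreover have "lt j \<in> keys (h i)" "lt i \<in> keys (h j)"
    using lead[OF i] lead[OF j] eq by (simp_all add: in_keys_iff)
  ultimately have "C (lt i) < C (lt j)" "C (lt j) < C (lt i)"
    using lighter i j by auto
  then show False
    by simp
qed

lemma triangular_combination_eq_0:
  fixes h :: "'i \<Rightarrow> 'a::field mpoly" and lt :: "'i \<Rightarrow> mon" and C :: "mon \<Rightarrow> 'b::linorder"
  assumes inj: "inj_on lt I"
    and lead: "\<And>i. i \<in> I \<Longrightarrow> lookup (h i) (lt i) \<noteq> 0"
    and lighter: "\<And>i \<beta>. i \<in> I \<Longrightarrow> \<beta> \<in> keys (h i) \<Longrightarrow> \<beta> \<noteq> lt i \<Longrightarrow> C (lt i) < C \<beta>"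
    and J: "finite J" "J \<subseteq> I" and sum0: "(\<Sum>i\<in>J. mscale (u i) (h i)) = 0"
  shows "\<forall>i\<in>J. u i = 0"
proof (rule ccontr)
  define K where "K = {i \<in> J. u i \<noteq> 0}"
  assume "\<not> (\<forall>i\<in>J. u i = 0)"
  then have "finite K" "K \<noteq> {}"
    using J(1) by (auto simp: K_def)
  text \<open>The lightest distinguished monomial of a member with nonzero coefficient occurs in no
    other member with nonzero coefficient.\<close>
  then have "Min ((\<lambda>i. C (lt i)) ` K) \<in> (\<lambda>i. C (lt i)) ` K"
    by (intro Min_in) auto
  then obtain i0 where i0: "i0 \<in> K" and i0_min: "C (lt i0) = Min ((\<lambda>i. C (lt i)) ` K)"
    by auto
  have min: "C (lt i0) \<le> C (lt i)" if "i \<in> K" for i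
    using \<open>finite K\<close> that by (simp add: i0_min)
  have others: "u i * lookup (h i) (lt i0) = 0" if "i \<in> J - {i0}" for i
  proof (rule ccontr)
    assume "u i * lookup (h i) (lt i0) \<noteq> 0"
    then have "i \<in> K" "lt i0 \<in> keys (h i)"
      using that by (auto simp: K_def in_keys_iff)
    moreover have "lt i0 \<noteq> lt i"
      using inj that i0 J(2) by (auto simp: K_def dest: inj_onD)
    ultimately show False
      using lighter[of i "lt i0"] min[of i] that J(2) by auto
  qed
  have "0 = (\<Sum>i\<in>J. u i * lookup (h i) (lt i0))"
    using arg_cong[OF sum0, of "\<lambda>p. lookup p (lt i0)"] by (simp add: lookup_sum)
  also have "\<dots> = u i0 * lookup (h i0) (lt i0) + (\<Sum>i\<in>J - {i0}. u i * lookup (h i) (lt i0))"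
    using J(1) i0 by (intro sum.remove) (auto simp: K_def)
  also have "(\<Sum>i\<in>J - {i0}. u i * lookup (h i) (lt i0)) = 0"
    using others by (intro sum.neutral) blast
  finally show False
    using i0 lead J(2) by (auto simp: K_def)
qed

lemma triangular_independent:
  fixes h :: "'i \<Rightarrow> 'a::field mpoly" and lt :: "'i \<Rightarrow> mon" and C :: "mon \<Rightarrow> 'b::linorder"
  assumes inj: "inj_on lt I"
    and lead: "\<And>i. i \<in> I \<Longrightarrow> lookup (h i) (lt i) \<noteq> 0"
    and lighter: "\<And>i \<beta>. i \<in> I \<Longrightarrow> \<beta> \<in> keys (h i) \<Longrightarrow> \<beta> \<noteq> lt i \<Longrightarrow> C (lt i) < C \<beta>"
  shows "vs.independent (h ` I)"
proof
  assume "vs.dependent (h ` I)"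
  then obtain t u where t: "finite t" "t \<subseteq> h ` I" and sum0: "(\<Sum>v\<in>t. mscale (u v) v) = 0"
    and nz: "\<exists>v\<in>t. u v \<noteq> 0"
    unfolding vs.dependent_explicit by blast
  obtain J where J: "J \<subseteq> I" "t = h ` J"
    using t(2) by (meson subset_image_iff)
  have inj_h: "inj_on h J"
    using triangular_inj_on[where h=h and lt=lt and C=C, OF inj lead lighter] J(1)
    by (rule inj_on_subset)
  then have "finite J"
    using t(1) J(2) finite_image_iff by blast
  moreover have "(\<Sum>i\<in>J. mscale (u (h i)) (h i)) = 0"
    using sum0 J(2) inj_h by (simp add: sum.reindex)
  ultimately have "\<forall>i\<in>J. u (h i) = 0"
    using triangular_combination_eq_0[where h=h and lt=lt and C=C and u="\<lambda>i. u (h i)",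
        OF assms _ J(1)]
    by simp
  then show False
    using nz J(2) by blast
qed

lemma dim_span_triangular:
  fixes h :: "'i \<Rightarrow> 'a::field mpoly" and lt :: "'i \<Rightarrow> mon" and C :: "mon \<Rightarrow> 'b::linorder"
  assumes "inj_on lt I"
    and "\<And>i. i \<in> I \<Longrightarrow> lookup (h i) (lt i) \<noteq> 0"
    and "\<And>i \<beta>. i \<in> I \<Longrightarrow> \<beta> \<in> keys (h i) \<Longrightarrow> \<beta> \<noteq> lt i \<Longrightarrow> C (lt i) < C \<beta>"
  shows "vs.dim (vs.span (h ` I)) = card I"
  using vs.dim_span_eq_card_independent[
      OF triangular_independent[where h=h and lt=lt and C=C, OF assms]]
    card_image[OF triangular_inj_on[where h=h and lt=lt and C=C, OF assms]] by simp

lemma dim_keys_subset: "vs.dim {p :: 'a::field mpoly. keys p \<subseteq> B} = card B"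
  using dim_span_triangular[of id B "\<lambda>\<alpha>. single \<alpha> (1::'a)" "\<lambda>_. ()"]
  by (simp add: span_single_one)

section \<open>Monomials and homogeneous components\<close>

definition weight :: "('v \<Rightarrow> 'b::comm_semiring_1) \<Rightarrow> ('v \<Rightarrow>\<^sub>0 nat) \<Rightarrow> 'b" where
  "weight w \<alpha> = (\<Sum>v\<in>keys \<alpha>. of_nat (lookup \<alpha> v) * w v)"

lemma weight_add: "weight w (\<alpha> + \<beta>) = weight w \<alpha> + weight w \<beta>"
  unfolding weight_def by (rule setsum_keys_plus_distrib) (simp_all add: distrib_right)

lemma weight_zero [simp]: "weight w 0 = 0"
  by (simp add: weight_def)

lemma weight_single [simp]: "weight w (single v n) = of_nat n * w v"
  by (simp add: weight_def)

lemma weight_sum: "weight w (\<Sum>i\<in>I. \<alpha> i) = (\<Sum>i\<in>I. weight w (\<alpha> i))"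
  by (induction I rule: infinite_finite_induct) (simp_all add: weight_add)

lemma mon_deg_eq_weight: "mon_deg \<alpha> = weight (\<lambda>_. 1) \<alpha>"
  by (simp add: mon_deg_def weight_def)

lemma mon_deg_add: "mon_deg (\<alpha> + \<beta>) = mon_deg \<alpha> + mon_deg \<beta>"
  by (simp add: mon_deg_eq_weight weight_add)

lemma mon_deg_zero [simp]: "mon_deg 0 = 0"
  by (simp add: mon_deg_def)

lemma mon_deg_single [simp]: "mon_deg (single v n) = n"
  by (simp add: mon_deg_eq_weight)

lemma mon_deg_sum: "mon_deg (\<Sum>i\<in>I. \<alpha> i) = (\<Sum>i\<in>I. mon_deg (\<alpha> i))"
  by (simp add: mon_deg_eq_weight weight_sum)

lemma keys_add_nat: "keys (\<alpha> + \<beta>) = keys \<alpha> \<union> keys (\<beta> :: 'v \<Rightarrow>\<^sub>0 nat)"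
  by (auto simp: in_keys_iff lookup_add)

lemma card_keys_le_mon_deg: "card (keys \<alpha>) \<le> mon_deg \<alpha>"
  unfolding mon_deg_def card_eq_sum by (rule sum_mono) (simp add: in_keys_iff)

definition monomials_in :: "(nat \<times> nat \<times> nat) set \<Rightarrow> nat \<Rightarrow> mon set" where
  "monomials_in A d = {\<alpha>. keys \<alpha> \<subseteq> A \<and> mon_deg \<alpha> = d}"

lemma monomials_in_add:
  "\<alpha> \<in> monomials_in A d \<Longrightarrow> \<beta> \<in> monomials_in A e \<Longrightarrow> \<alpha> + \<beta> \<in> monomials_in A (d + e)"
  by (auto simp: monomials_in_def mon_deg_add keys_add_nat)

lemma monomials_in_add_cancel:
  "\<alpha> + \<beta> \<in> monomials_in A (d + e) \<Longrightarrow> \<beta> \<in> monomials_in A e \<Longrightarrow> \<alpha> \<in> monomials_in A d"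
  by (auto simp: monomials_in_def mon_deg_add keys_add_nat)

text \<open>Monomials are multisets of variables, which lets the library count them.\<close>

definition mon_of_mset :: "(nat \<times> nat \<times> nat) multiset \<Rightarrow> mon" where
  "mon_of_mset M = Abs_poly_mapping (count M)"

lemma lookup_mon_of_mset [simp]: "lookup (mon_of_mset M) = count M"
proof -
  have "{x. count M x \<noteq> 0} = set_mset M"
    by auto
  then show ?thesis
    by (simp add: mon_of_mset_def)
qed

lemma keys_mon_of_mset [simp]: "keys (mon_of_mset M) = set_mset M"
  by (auto simp: in_keys_iff)

lemma mon_deg_mon_of_mset [simp]: "mon_deg (mon_of_mset M) = size M"
  by (simp add: mon_deg_def size_multiset_overloaded_eq)

lemma monomials_in_eq_image_mon_of_mset:
  "monomials_in A d = mon_of_mset ` multisets_of_size A d"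
proof (intro equalityI subsetI)
  fix \<alpha>
  assume \<alpha>: "\<alpha> \<in> monomials_in A d"
  define M where "M = Abs_multiset (lookup \<alpha>)"
  have "count M = lookup \<alpha>"
    unfolding M_def by (rule count_Abs_multiset) (simp flip: lookup_not_eq_zero_eq_in_keys)
  then have eq: "\<alpha> = mon_of_mset M"
    by (simp add: poly_mapping_eq_iff)
  moreover have "M \<in> multisets_of_size A d"
    using \<alpha> by (simp add: eq monomials_in_def multisets_of_size_def)
  ultimately show "\<alpha> \<in> mon_of_mset ` multisets_of_size A d"
    by blast
qed (auto simp: monomials_in_def multisets_of_size_def)

lemma finite_monomials_in [simp]: "finite A \<Longrightarrow> finite (monomials_in A d)"
  by (auto simp: monomials_in_eq_image_mon_of_mset)

lemma card_monomials_in: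
  assumes "finite A"
  shows "card (monomials_in A d) = (card A + d - 1) choose d"
proof -
  have "inj mon_of_mset"
    by (rule injI) (simp add: poly_mapping_eq_iff multiset_eq_iff fun_eq_iff)
  then show ?thesis
    using card_multisets_of_size[OF assms]
    by (simp add: monomials_in_eq_image_mon_of_mset card_image inj_on_subset)
qed

definition sqfree_mon :: "(nat \<times> nat \<times> nat) set \<Rightarrow> mon" where
  "sqfree_mon A = (\<Sum>v\<in>A. single v 1)"

lemma lookup_sqfree_mon: "finite A \<Longrightarrow> lookup (sqfree_mon A) v = (if v \<in> A then 1 else 0)"
  by (simp add: sqfree_mon_def lookup_sum lookup_single when_def)

lemma keys_sqfree_mon [simp]: "finite A \<Longrightarrow> keys (sqfree_mon A) = A"
  by (auto simp: in_keys_iff lookup_sqfree_mon split: if_splits)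

lemma mon_deg_sqfree_mon [simp]: "mon_deg (sqfree_mon A) = card A"
  by (cases "finite A") (simp_all add: sqfree_mon_def mon_deg_sum)

lemma sqfree_mon_dvd:
  assumes "finite A" "A \<subseteq> keys \<alpha>"
  shows "(\<alpha> - sqfree_mon A) + sqfree_mon A = \<alpha>" and "keys (\<alpha> - sqfree_mon A) \<subseteq> keys \<alpha>"
  using assms
  by (auto simp: poly_mapping_eq_iff fun_eq_iff lookup_add lookup_minus lookup_sqfree_mon in_keys_iff)

definition monomials_with_support :: "(nat \<times> nat \<times> nat) set \<Rightarrow> nat \<Rightarrow> mon set" where
  "monomials_with_support A n = {\<alpha>. keys \<alpha> = A \<and> mon_deg \<alpha> = n}"

lemma monomials_with_support_eq_image:
  assumes "finite A" "card A \<le> n"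
  shows "monomials_with_support A n = (\<lambda>\<beta>. \<beta> + sqfree_mon A) ` monomials_in A (n - card A)"
proof (intro equalityI subsetI)
  fix \<alpha>
  assume \<alpha>: "\<alpha> \<in> monomials_with_support A n"
  then have "\<alpha> - sqfree_mon A \<in> monomials_in A (n - card A)"
    using sqfree_mon_dvd[OF assms(1), of \<alpha>] mon_deg_add[of "\<alpha> - sqfree_mon A" "sqfree_mon A"]
    by (auto simp: monomials_with_support_def monomials_in_def)
  then show "\<alpha> \<in> (\<lambda>\<beta>. \<beta> + sqfree_mon A) ` monomials_in A (n - card A)"
    using sqfree_mon_dvd(1)[OF assms(1), of \<alpha>] \<alpha>
    by (auto simp: monomials_with_support_def intro!: image_eqI[of _ _ "\<alpha> - sqfree_mon A"])
qed (use assms in \<open>auto simp: monomials_with_support_def monomials_in_def keys_add_nat mon_deg_add\<close>)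

lemma card_monomials_with_support:
  assumes "finite A" "1 \<le> n"
  shows "card (monomials_with_support A n) = (if A = {} then 0 else (n - 1) choose (card A - 1))"
proof (cases "card A \<le> n")
  case True
  have "card (monomials_with_support A n) = card (monomials_in A (n - card A))"
    by (simp add: monomials_with_support_eq_image[OF assms(1) True] card_image inj_on_def)
  also have "\<dots> = (card A + (n - card A) - 1) choose (n - card A)"
    by (rule card_monomials_in[OF assms(1)])
  also have "\<dots> = (if A = {} then 0 else (n - 1) choose (card A - 1))"
  proof (cases "A = {}")
    case False
    then have "card A - 1 \<le> n - 1" "n - 1 - (card A - 1) = n - card A"
      using True assms by (auto simp: card_gt_0_iff Suc_le_eq)
    then show ?thesis
      using False True binomial_symmetric[of "card A - 1" "n - 1"] by simp
  qed (use assms in simp)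
  finally show ?thesis .
next
  case False
  then have "monomials_with_support A n = {}"
    using card_keys_le_mon_deg by (fastforce simp: monomials_with_support_def)
  then show ?thesis
    using False assms by auto
qed

lemma keys_mult_monomials_in:
  assumes "keys p \<subseteq> monomials_in A d" "keys q \<subseteq> monomials_in A e"
  shows "keys (p * q) \<subseteq> monomials_in A (d + e)"
  using keys_mult[of p q] monomials_in_add assms by blast

lemma keys_single_one_mult: "keys (single \<mu> 1 * (p :: 'a::comm_ring_1 mpoly)) \<subseteq> (+) \<mu> ` keys p"
  using keys_mult[of "single \<mu> 1" p] by auto

lemma lookup_single_one_mult: "lookup (single \<mu> 1 * (p :: 'a::comm_ring_1 mpoly)) (\<mu> + \<beta>) = lookup p \<beta>"
proof -
  have "single \<mu> 1 * p = (\<Sum>\<gamma>\<in>keys p. single (\<mu> + \<gamma>) (lookup p \<gamma>))"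
    by (subst (1) sum_single_lookup[of p, symmetric]) (simp add: sum_distrib_left mult_single)
  then show ?thesis
    by (simp add: lookup_sum lookup_single when_def in_keys_iff)
qed

definition restrict_mons :: "mon set \<Rightarrow> 'a::zero mpoly \<Rightarrow> 'a mpoly" where
  "restrict_mons S p = Abs_poly_mapping (\<lambda>\<alpha>. lookup p \<alpha> when \<alpha> \<in> S)"

lemma lookup_restrict_mons: "lookup (restrict_mons S p) \<alpha> = (lookup p \<alpha> when \<alpha> \<in> S)"
proof -
  have "finite {\<alpha>. (lookup p \<alpha> when \<alpha> \<in> S) \<noteq> 0}"
    by (rule finite_subset[of _ "keys p"]) (auto simp: in_keys_iff)
  then show ?thesis
    by (simp add: restrict_mons_def)
qed

lemma keys_restrict_mons: "keys (restrict_mons S p) = keys p \<inter> S"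
  by (auto simp: in_keys_iff lookup_restrict_mons)

lemma restrict_mons_add: "restrict_mons S (p + q) = restrict_mons S p + restrict_mons S q"
  by (rule poly_mapping_eqI) (simp add: lookup_restrict_mons lookup_add when_def)

lemma restrict_mons_sum: "restrict_mons S (\<Sum>i\<in>I. p i) = (\<Sum>i\<in>I. restrict_mons S (p i))"
  by (rule poly_mapping_eqI) (simp add: lookup_restrict_mons lookup_sum when_def)

lemma restrict_mons_id: "keys p \<subseteq> S \<Longrightarrow> restrict_mons S p = p"
  by (rule poly_mapping_eqI) (auto simp: lookup_restrict_mons when_def in_keys_iff)

lemma restrict_mons_eq_0: "keys p \<inter> S = {} \<Longrightarrow> restrict_mons S p = 0"
  by (rule poly_mapping_eqI) (auto simp: lookup_restrict_mons when_def in_keys_iff)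

lemma restrict_mons_split: "restrict_mons S p + restrict_mons (- S) p = p"
  by (rule poly_mapping_eqI) (simp add: lookup_restrict_mons lookup_add when_def)

lemma restrict_mons_mult_homogeneous:
  assumes q: "keys (q :: 'a::comm_ring_1 mpoly) \<subseteq> monomials_in A e"
  shows "restrict_mons (monomials_in A (d + e)) (c * q) = restrict_mons (monomials_in A d) c * q"
proof -
  let ?c1 = "restrict_mons (monomials_in A d) c" and ?c2 = "restrict_mons (- monomials_in A d) c"
  have "keys (?c1 * q) \<subseteq> monomials_in A (d + e)"
    using keys_mult_monomials_in[OF _ q] by (simp add: keys_restrict_mons)
  moreover have "keys (?c2 * q) \<inter> monomials_in A (d + e) = {}"
    using keys_mult[of ?c2 q] monomials_in_add_cancel q by (fastforce simp: keys_restrict_mons)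
  moreover have "c * q = ?c1 * q + ?c2 * q"
    by (simp flip: distrib_right add: restrict_mons_split)
  ultimately show ?thesis
    by (simp add: restrict_mons_add restrict_mons_id restrict_mons_eq_0)
qed

section \<open>The coefficients of the determinant\<close>

definition vars :: "nat \<Rightarrow> nat \<Rightarrow> (nat \<times> nat \<times> nat) set" where
  "vars m k = {..<m} \<times> {..<m} \<times> {..<k}"

lemma finite_vars [simp]: "finite (vars m k)"
  by (simp add: vars_def)

lemma card_vars: "card (vars m k) = m * m * k"
  by (simp add: vars_def card_cartesian_product)

lemma hom_part_eq: "hom_part m k n = {p. keys p \<subseteq> monomials_in (vars m k) n}"
  unfolding hom_part_def monomials_in_def vars_def by fastforce

lemma dim_hom_part: "vs.dim (hom_part m k n :: 'a::field mpoly set) = card (monomials_in (vars m k) n)"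
  by (simp add: hom_part_eq dim_keys_subset)

definition perm_mon :: "nat \<Rightarrow> (nat \<Rightarrow> nat) \<Rightarrow> (nat \<Rightarrow> nat) \<Rightarrow> mon" where
  "perm_mon m \<sigma> f = (\<Sum>i = 0..<m. single (i, \<sigma> i, f i) 1)"

definition splittings :: "nat \<Rightarrow> nat \<Rightarrow> nat \<Rightarrow> (nat \<Rightarrow> nat) set" where
  "splittings m k l = {f \<in> {0..<m} \<rightarrow>\<^sub>E {..<k}. sum f {0..<m} = l}"

lemma finite_splittings [simp]: "finite (splittings m k l)"
  by (simp add: splittings_def finite_PiE)

definition det_coeff :: "nat \<Rightarrow> nat \<Rightarrow> nat \<Rightarrow> 'a::comm_ring_1 mpoly" where
  "det_coeff m k l = coeff (det (Xmat m k)) l"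

lemma det_coeffs_eq_image: "det_coeffs m k = det_coeff m k ` {..<k}"
  by (auto simp: det_coeffs_def det_coeff_def)

lemma prod_monom: "(\<Prod>i\<in>I. monom (c i) (n i)) = monom (\<Prod>i\<in>I. c i) (\<Sum>i\<in>I. n i)"
  by (induction I rule: infinite_finite_induct) (auto simp: mult_monom one_pCons monom_0)

lemma prod_single_one: "(\<Prod>i\<in>I. single (\<alpha> i) (1::'b::comm_semiring_1)) = single (\<Sum>i\<in>I. \<alpha> i) 1"
  by (induction I rule: infinite_finite_induct) (auto simp: mult_single)

lemma signof_mult_single_one: "(signof \<sigma> :: 'a::comm_ring_1 mpoly) * single \<alpha> 1 = single \<alpha> (signof \<sigma>)"
  by (cases \<sigma> rule: sign_cases) (simp_all add: single_uminus)

lemma coeff_signof_mult: "coeff (signof \<sigma> * p) l = signof \<sigma> * coeff p l"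
  by (cases \<sigma> rule: sign_cases) simp_all

lemma prod_Xmat_diagonal:
  assumes "\<sigma> permutes {0..<m}"
  shows "(\<Prod>i = 0..<m. (Xmat m k :: 'a::comm_ring_1 mpoly poly mat) $$ (i, \<sigma> i)) =
    (\<Sum>f \<in> {0..<m} \<rightarrow>\<^sub>E {..<k}. monom (single (perm_mon m \<sigma> f) 1) (sum f {0..<m}))"
proof -
  have "(\<Prod>i = 0..<m. (Xmat m k :: 'a mpoly poly mat) $$ (i, \<sigma> i)) =
      (\<Prod>i = 0..<m. \<Sum>l<k. monom (var i (\<sigma> i) l :: 'a mpoly) l)"
    using permutes_in_image[OF assms] by (intro prod.cong) (auto simp: Xmat_def)
  also have "\<dots> = (\<Sum>f \<in> {0..<m} \<rightarrow>\<^sub>E {..<k}. \<Prod>i = 0..<m. monom (var i (\<sigma> i) (f i) :: 'a mpoly) (f i))"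
    by (rule prod_sum_PiE) auto
  also have "\<dots> = (\<Sum>f \<in> {0..<m} \<rightarrow>\<^sub>E {..<k}. monom (single (perm_mon m \<sigma> f) 1) (sum f {0..<m}))"
    by (simp add: prod_monom var_def prod_single_one perm_mon_def)
  finally show ?thesis .
qed

lemma det_coeff_eq_sum:
  "det_coeff m k l = (\<Sum>(\<sigma>, f) \<in> {\<sigma>. \<sigma> permutes {0..<m}} \<times> splittings m k l.
     single (perm_mon m \<sigma> f) (signof \<sigma>) :: 'a::comm_ring_1 mpoly)"
proof -
  have "dim_row (Xmat m k :: 'a mpoly poly mat) = m" "dim_col (Xmat m k :: 'a mpoly poly mat) = m"
    by (simp_all add: Xmat_def)
  then have det_eq: "det (Xmat m k :: 'a mpoly poly mat) = (\<Sum>\<sigma> | \<sigma> permutes {0..<m}. signof \<sigma> *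
      (\<Sum>f \<in> {0..<m} \<rightarrow>\<^sub>E {..<k}. monom (single (perm_mon m \<sigma> f) 1) (sum f {0..<m})))"
    by (simp add: det_def prod_Xmat_diagonal)
  have "(det_coeff m k l :: 'a mpoly) = coeff (\<Sum>\<sigma> | \<sigma> permutes {0..<m}. signof \<sigma> *
      (\<Sum>f \<in> {0..<m} \<rightarrow>\<^sub>E {..<k}. monom (single (perm_mon m \<sigma> f) 1) (sum f {0..<m}))) l"
    by (simp only: det_coeff_def det_eq)
  also have "\<dots> = (\<Sum>\<sigma> | \<sigma> permutes {0..<m}. signof \<sigma> *
      (\<Sum>f \<in> {0..<m} \<rightarrow>\<^sub>E {..<k}. if sum f {0..<m} = l then single (perm_mon m \<sigma> f) 1 else 0))"
    by (simp add: coeff_sum coeff_signof_mult)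
  also have "\<dots> = (\<Sum>\<sigma> | \<sigma> permutes {0..<m}. \<Sum>f \<in> splittings m k l. single (perm_mon m \<sigma> f) (signof \<sigma>))"
    unfolding splittings_def
    by (simp add: sum.inter_filter[symmetric] finite_PiE sum_distrib_left signof_mult_single_one)
  finally show ?thesis
    by (simp add: sum.cartesian_product)
qed

section \<open>The lightest monomial of a determinant coefficient\<close>

definition offset :: "nat \<Rightarrow> (nat \<Rightarrow> nat) \<Rightarrow> (nat \<Rightarrow> nat) \<Rightarrow> nat \<Rightarrow> int" where
  "offset m \<sigma> f i = int m * int (f i) + int (\<sigma> i) - int i"

definition cost :: "nat \<Rightarrow> mon \<Rightarrow> int" where
  "cost m = weight (\<lambda>(i, j, a). (int m * int a + int j - int i)\<^sup>2)"

lemma cost_add: "cost m (\<alpha> + \<beta>) = cost m \<alpha> + cost m \<beta>"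
  by (simp add: cost_def weight_add)

lemma cost_perm_mon: "cost m (perm_mon m \<sigma> f) = (\<Sum>i = 0..<m. (offset m \<sigma> f i)\<^sup>2)"
  by (simp add: cost_def perm_mon_def weight_sum offset_def)

lemma sum_offset:
  assumes "\<sigma> permutes {0..<m}"
  shows "(\<Sum>i = 0..<m. offset m \<sigma> f i) = int m * int (sum f {0..<m})"
proof -
  have "(\<Sum>i = 0..<m. int (\<sigma> i)) = (\<Sum>i = 0..<m. int i)"
    using sum.permute[OF assms, of int] by (simp add: comp_def)
  then show ?thesis
    by (simp add: offset_def sum.distrib sum_subtractf sum_distrib_left)
qed

lemma sum_power2_eq_mean_deviation:
  fixes x :: "'i \<Rightarrow> 'a::comm_ring_1"
  assumes "(\<Sum>i\<in>I. x i) = of_nat (card I) * c"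
  shows "(\<Sum>i\<in>I. (x i)\<^sup>2) = of_nat (card I) * c\<^sup>2 + (\<Sum>i\<in>I. (x i - c)\<^sup>2)"
proof -
  have "(\<Sum>i\<in>I. (x i - c)\<^sup>2) = (\<Sum>i\<in>I. (x i)\<^sup>2 - 2 * c * x i + c\<^sup>2)"
    by (intro sum.cong) (simp_all add: power2_eq_square algebra_simps)
  also have "\<dots> = (\<Sum>i\<in>I. (x i)\<^sup>2) - 2 * c * (\<Sum>i\<in>I. x i) + of_nat (card I) * c\<^sup>2"
    by (simp add: sum.distrib sum_subtractf sum_distrib_left)
  finally show ?thesis
    using assms by (simp add: power2_eq_square algebra_simps)
qed

lemma cost_perm_mon_eq:
  assumes "\<sigma> permutes {0..<m}" "f \<in> splittings m k l"
  shows "cost m (perm_mon m \<sigma> f) = int m * int l ^ 2 + (\<Sum>i = 0..<m. (offset m \<sigma> f i - int l)\<^sup>2)"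
proof -
  have "(\<Sum>i = 0..<m. offset m \<sigma> f i) = of_nat (card {0..<m}) * int l"
    using sum_offset[OF assms(1), of f] assms(2) by (simp add: splittings_def del: of_nat_sum)
  from sum_power2_eq_mean_deviation[OF this] show ?thesis
    by (simp add: cost_perm_mon)
qed

text \<open>
  shift m l and carry m l describe the unique term of g_l all of whose offsets equal l; carry is
  undefined outside {0..<m} because members of a PiE set must be.
\<close>

definition shift :: "nat \<Rightarrow> nat \<Rightarrow> nat \<Rightarrow> nat" where
  "shift m l = (\<lambda>i. if i < m then (i + l) mod m else i)"

definition carry :: "nat \<Rightarrow> nat \<Rightarrow> nat \<Rightarrow> nat" where
  "carry m l = (\<lambda>i. if i < m then (i + l) div m else undefined)"

lemma inj_on_add_mod: "inj_on (\<lambda>i. (i + l) mod m) {0..<m :: nat}"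
proof -
  have le_imp_eq: "i = j" if "i < m" "j < m" "i \<le> j" "(i + l) mod m = (j + l) mod m" for i j :: nat
  proof -
    have "m dvd j - i"
      using mod_eq_dvd_iff_nat[of "i + l" "j + l" m] that by simp
    then show ?thesis
      using nat_dvd_not_less[of "j - i" m] that by linarith
  qed
  show ?thesis
  proof (rule inj_onI)
    fix i j
    assume "i \<in> {0..<m}" "j \<in> {0..<m}" "(i + l) mod m = (j + l) mod m"
    then show "i = j"
      using le_imp_eq[of i j] le_imp_eq[of j i] by (cases "i \<le> j") auto
  qed
qed

lemma shift_permutes: "shift m l permutes {0..<m}"
proof -
  have "(\<lambda>i. (i + l) mod m) ` {0..<m} = {0..<m}"
    by (rule endo_inj_surj) (auto simp: inj_on_add_mod)
  then have "bij_betw (\<lambda>i. (i + l) mod m) {0..<m} {0..<m}"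
    by (simp add: bij_betw_def inj_on_add_mod)
  from permutes_restrict_id[OF this] show ?thesis
    by (simp add: restrict_id_def shift_def)
qed

lemma carry_le:
  assumes "i < m"
  shows "(i + l) div m \<le> (l :: nat)"
proof -
  have "i + l < Suc l * m"
    using assms by (cases m) auto
  then show ?thesis
    using less_mult_imp_div_less by (metis less_Suc_eq_le)
qed

lemma offset_shift_carry: "i < m \<Longrightarrow> offset m (shift m l) (carry m l) i = int l"
  unfolding offset_def shift_def carry_def
  by (simp only: if_True of_nat_mult[symmetric] of_nat_add[symmetric] mult_div_mod_eq)

lemma carry_in_splittings:
  assumes "0 < m" "l < k"
  shows "carry m l \<in> splittings m k l"
proof -
  have "int m * int (sum (carry m l) {0..<m}) = (\<Sum>i = 0..<m. offset m (shift m l) (carry m l) i)"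
    using sum_offset[OF shift_permutes] by (simp del: of_nat_sum)
  also have "\<dots> = int m * int l"
    by (simp add: offset_shift_carry)
  finally have "sum (carry m l) {0..<m} = l"
    using assms(1) by (simp del: of_nat_sum)
  moreover have "carry m l i < k" if "i < m" for i
    using carry_le[OF that, of l] assms(2) that by (simp add: carry_def)
  ultimately show ?thesis
    by (auto simp: splittings_def carry_def PiE_def extensional_def)
qed

lemma offsets_eq_imp_shift_carry:
  assumes "\<sigma> permutes {0..<m}" "f \<in> {0..<m} \<rightarrow>\<^sub>E {..<k}"
    and "\<And>i. i < m \<Longrightarrow> offset m \<sigma> f i = int l"
  shows "\<sigma> = shift m l \<and> f = carry m l"
proof -
  have "\<sigma> i = (i + l) mod m \<and> f i = (i + l) div m" if "i < m" for i
  proof -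
    have "int m * int (f i) + int (\<sigma> i) = int i + int l"
      using assms(3)[OF that] unfolding offset_def by linarith
    then have eq: "\<sigma> i + m * f i = i + l"
      by (simp only: of_nat_mult[symmetric] of_nat_add[symmetric] of_nat_eq_iff add.commute)
    have "\<sigma> i < m"
      using permutes_in_image[OF assms(1)] that by simp
    then show ?thesis
      unfolding eq[symmetric] by simp
  qed
  then show ?thesis
    using permutes_not_in[OF assms(1)] assms(2)
    by (auto simp: shift_def carry_def fun_eq_iff PiE_def extensional_def)
qed

lemma cost_perm_mon_gt:
  assumes "\<sigma> permutes {0..<m}" "f \<in> splittings m k l" "(\<sigma>, f) \<noteq> (shift m l, carry m l)"
  shows "int m * int l ^ 2 < cost m (perm_mon m \<sigma> f)"
proof -
  have "f \<in> {0..<m} \<rightarrow>\<^sub>E {..<k}"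
    using assms(2) by (simp add: splittings_def)
  then obtain i where i: "i < m" "offset m \<sigma> f i \<noteq> int l"
    using offsets_eq_imp_shift_carry[OF assms(1)] assms(3) by blast
  have "0 < (offset m \<sigma> f i - int l)\<^sup>2"
    using i(2) by simp
  also have "\<dots> \<le> (\<Sum>i = 0..<m. (offset m \<sigma> f i - int l)\<^sup>2)"
    by (rule member_le_sum) (use i in auto)
  finally show ?thesis
    using cost_perm_mon_eq[OF assms(1,2)] by simp
qed

definition lead_block :: "nat \<Rightarrow> nat \<Rightarrow> (nat \<times> nat \<times> nat) set" where
  "lead_block m l = (\<lambda>i. (i, (i + l) mod m, (i + l) div m)) ` {0..<m}"

definition lead_mon :: "nat \<Rightarrow> nat \<Rightarrow> mon" where
  "lead_mon m l = sqfree_mon (lead_block m l)"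

lemma finite_lead_block [simp]: "finite (lead_block m l)"
  by (simp add: lead_block_def)

lemma card_lead_block [simp]: "card (lead_block m l) = m"
  by (simp add: lead_block_def card_image inj_on_def)

lemma keys_lead_mon [simp]: "keys (lead_mon m l) = lead_block m l"
  by (simp add: lead_mon_def)

lemma mon_deg_lead_mon [simp]: "mon_deg (lead_mon m l) = m"
  by (simp add: lead_mon_def)

lemma lead_block_subset_vars:
  assumes "l < k"
  shows "lead_block m l \<subseteq> vars m k"
  unfolding lead_block_def vars_def
proof (rule image_subsetI)
  fix i
  assume "i \<in> {0..<m}"
  then show "(i, (i + l) mod m, (i + l) div m) \<in> {..<m} \<times> {..<m} \<times> {..<k}"
    using carry_le[of i m l] assms by auto
qed

lemma lead_mon_in_monomials: "l < k \<Longrightarrow> lead_mon m l \<in> monomials_in (vars m k) m"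
  by (simp add: monomials_in_def lead_block_subset_vars)

lemma lead_mon_cofactor:
  assumes "lead_block m j \<subseteq> keys \<mu>" "\<mu> \<in> monomials_in (vars m k) d"
  shows "\<mu> - lead_mon m j + lead_mon m j = \<mu>" "\<mu> - lead_mon m j \<in> monomials_in (vars m k) (d - m)"
    "m \<le> d"
proof -
  have eq: "\<mu> - lead_mon m j + lead_mon m j = \<mu>" and "keys (\<mu> - lead_mon m j) \<subseteq> keys \<mu>"
    using sqfree_mon_dvd[of "lead_block m j" \<mu>] assms(1) by (simp_all add: lead_mon_def)
  moreover have "mon_deg (\<mu> - lead_mon m j) + m = d"
    using assms(2) mon_deg_add[of "\<mu> - lead_mon m j" "lead_mon m j"] eq by (simp add: monomials_in_def)
  ultimately show "\<mu> - lead_mon m j + lead_mon m j = \<mu>"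
    "\<mu> - lead_mon m j \<in> monomials_in (vars m k) (d - m)" "m \<le> d"
    using assms(2) by (auto simp: monomials_in_def)
qed

lemma lead_block_disjoint: "l \<noteq> l' \<Longrightarrow> lead_block m l \<inter> lead_block m l' = {}"
  by (auto simp: lead_block_def) (metis div_mult_mod_eq add_left_cancel)

lemma lead_mon_eq_perm_mon: "lead_mon m l = perm_mon m (shift m l) (carry m l)"
  unfolding lead_mon_def sqfree_mon_def lead_block_def perm_mon_def shift_def carry_def
  by (subst sum.reindex) (auto simp: inj_on_def)

lemma cost_lead_mon: "cost m (lead_mon m l) = int m * int l ^ 2"
  by (simp add: lead_mon_eq_perm_mon cost_perm_mon offset_shift_carry)

lemma perm_mon_eq_lead_mon_iff:
  assumes "\<sigma> permutes {0..<m}" "f \<in> splittings m k l"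
  shows "perm_mon m \<sigma> f = lead_mon m l \<longleftrightarrow> \<sigma> = shift m l \<and> f = carry m l"
proof
  assume eq: "perm_mon m \<sigma> f = lead_mon m l"
  show "\<sigma> = shift m l \<and> f = carry m l"
  proof (rule ccontr)
    assume "\<not> (\<sigma> = shift m l \<and> f = carry m l)"
    then have "int m * int l ^ 2 < cost m (perm_mon m \<sigma> f)"
      using cost_perm_mon_gt[OF assms] by auto
    then show False
      using eq cost_lead_mon by simp
  qed
qed (simp add: lead_mon_eq_perm_mon)

lemma perm_mon_in_monomials:
  assumes "\<sigma> permutes {0..<m}" "f \<in> splittings m k l"
  shows "perm_mon m \<sigma> f \<in> monomials_in (vars m k) m"
proof -
  have "keys (perm_mon m \<sigma> f) \<subseteq> (\<Union>i\<in>{0..<m}. keys (single (i, \<sigma> i, f i) (1::nat)))"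
    unfolding perm_mon_def by (rule keys_sum)
  also have "\<dots> \<subseteq> vars m k"
    using assms permutes_in_image[OF assms(1)] by (auto simp: splittings_def vars_def)
  finally show ?thesis
    by (simp add: monomials_in_def perm_mon_def mon_deg_sum)
qed

lemma keys_det_coeff:
  "keys (det_coeff m k l :: 'a::comm_ring_1 mpoly) \<subseteq>
     {perm_mon m \<sigma> f | \<sigma> f. \<sigma> permutes {0..<m} \<and> f \<in> splittings m k l}"
  unfolding det_coeff_eq_sum by (rule order.trans[OF keys_sum]) (fastforce split: if_splits)

lemma det_coeff_homogeneous:
  "keys (det_coeff m k l :: 'a::comm_ring_1 mpoly) \<subseteq> monomials_in (vars m k) m"
  using keys_det_coeff perm_mon_in_monomials by blast

lemma lead_mon_lightest:
  assumes "\<beta> \<in> keys (det_coeff m k l :: 'a::comm_ring_1 mpoly)" "\<beta> \<noteq> lead_mon m l"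
  shows "cost m (lead_mon m l) < cost m \<beta>"
proof -
  obtain \<sigma> f where \<sigma>f: "\<sigma> permutes {0..<m}" "f \<in> splittings m k l" "\<beta> = perm_mon m \<sigma> f"
    using assms(1) keys_det_coeff by blast
  then have "(\<sigma>, f) \<noteq> (shift m l, carry m l)"
    using assms(2) lead_mon_eq_perm_mon by auto
  then show ?thesis
    using cost_perm_mon_gt[OF \<sigma>f(1,2)] cost_lead_mon \<sigma>f(3) by simp
qed

lemma lookup_det_coeff_lead_mon:
  assumes "0 < m" "l < k"
  shows "lookup (det_coeff m k l :: 'a::comm_ring_1 mpoly) (lead_mon m l) = signof (shift m l)"
proof -
  let ?P = "{\<sigma>. \<sigma> permutes {0..<m}} \<times> splittings m k l"
  have "perm_mon m (fst p) (snd p) = lead_mon m l \<longleftrightarrow> p = (shift m l, carry m l)" if "p \<in> ?P" for p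
    using perm_mon_eq_lead_mon_iff that by (cases p) auto
  then have "lookup (det_coeff m k l :: 'a mpoly) (lead_mon m l) =
      (\<Sum>p\<in>?P. if p = (shift m l, carry m l) then signof (fst p) else 0)"
    unfolding det_coeff_eq_sum lookup_sum split_def
    by (intro sum.cong refl) (simp add: lookup_single when_def)
  also have "\<dots> = signof (shift m l)"
    using shift_permutes carry_in_splittings[OF assms] by (simp add: sum.delta finite_permutations)
  finally show ?thesis .
qed

lemma lookup_det_coeff_lead_mon_nonzero:
  assumes "0 < m" "l < k"
  shows "lookup (det_coeff m k l :: 'a::field mpoly) (lead_mon m l) \<noteq> 0"
  unfolding lookup_det_coeff_lead_mon[OF assms] by (cases "shift m l" rule: sign_cases) simp_all

lemma single_lead_mon_decomp:
  assumes "0 < m" "j < k"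
  obtains c and r :: "'a::field mpoly"
  where "single (lead_mon m j) 1 = mscale c (det_coeff m k j - r)"
    and "keys r \<subseteq> keys (det_coeff m k j :: 'a mpoly) - {lead_mon m j}"
proof
  define \<epsilon> where "\<epsilon> = lookup (det_coeff m k j :: 'a mpoly) (lead_mon m j)"
  have "\<epsilon> \<noteq> 0"
    unfolding \<epsilon>_def by (rule lookup_det_coeff_lead_mon_nonzero[OF assms])
  then show "single (lead_mon m j) 1 =
      mscale (inverse \<epsilon>) (det_coeff m k j - (det_coeff m k j - single (lead_mon m j) \<epsilon>))"
    by (simp add: mscale_eq_mult mult_single)
  show "keys (det_coeff m k j - single (lead_mon m j) \<epsilon>) \<subseteq>
      keys (det_coeff m k j :: 'a mpoly) - {lead_mon m j}"
    by (auto simp: in_keys_iff lookup_minus lookup_single \<epsilon>_def when_def split: if_splits)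
qed

section \<open>A triangular basis of the homogeneous parts of the ideal\<close>

global_interpretation self_module: Modules.module "(*) :: 'b::comm_ring_1 \<Rightarrow> 'b \<Rightarrow> 'b"
  by unfold_locales (simp_all add: algebra_simps)

lemma ideal_gen_eq_span: "ideal_gen G = self_module.span G"
  by (simp add: ideal_gen_def self_module.span_explicit)

lemma ideal_gen_subspace: "vs.subspace (ideal_gen (G :: 'a::field mpoly set))"
  unfolding vs.subspace_def ideal_gen_eq_span
  by (simp add: self_module.span_zero self_module.span_add self_module.span_scale mscale_eq_mult)

lemma I_ideal_eq_span: "I_ideal m k = self_module.span (det_coeff m k ` {..<k})"
  by (simp add: I_ideal_def ideal_gen_eq_span det_coeffs_eq_image)

lemma finite_weight_induct:
  fixes c :: "'b \<Rightarrow> 'c::linorder"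
  assumes "finite S" "x \<in> S"
    and step: "\<And>x. x \<in> S \<Longrightarrow> (\<And>y. y \<in> S \<Longrightarrow> c x < c y \<Longrightarrow> P y) \<Longrightarrow> P x"
  shows "P x"
  using assms(2)
proof (induction "card {y \<in> S. c x < c y}" arbitrary: x rule: less_induct)
  case less
  show ?case
  proof (rule step[OF less.prems])
    fix y
    assume y: "y \<in> S" "c x < c y"
    then have "{z \<in> S. c y < c z} \<subset> {z \<in> S. c x < c z}"
      by auto
    then have "card {z \<in> S. c y < c z} < card {z \<in> S. c x < c z}"
      using assms(1) by (intro psubset_card_mono) auto
    then show "P y"
      using less.hyps y(1) by blast
  qed
qed

definition basis_index :: "nat \<Rightarrow> nat \<Rightarrow> nat \<Rightarrow> (nat \<times> mon) set" where
  "basis_index m k d =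
     {(l, \<mu>). l < k \<and> \<mu> \<in> monomials_in (vars m k) d \<and> (\<forall>j<l. \<not> lead_block m j \<subseteq> keys \<mu>)}"

definition basis_poly :: "nat \<Rightarrow> nat \<Rightarrow> nat \<times> mon \<Rightarrow> 'a::comm_ring_1 mpoly" where
  "basis_poly m k = (\<lambda>(l, \<mu>). single \<mu> 1 * det_coeff m k l)"

definition basis_lead :: "nat \<Rightarrow> nat \<times> mon \<Rightarrow> mon" where
  "basis_lead m = (\<lambda>(l, \<mu>). \<mu> + lead_mon m l)"

lemma single_one_mult_det_coeff_homogeneous:
  "\<mu> \<in> monomials_in (vars m k) d \<Longrightarrow>
    keys (single \<mu> 1 * (det_coeff m k l :: 'a::comm_ring_1 mpoly)) \<subseteq> monomials_in (vars m k) (d + m)"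
  using keys_mult_monomials_in[OF _ det_coeff_homogeneous, of "single \<mu> 1"] by simp

text \<open>
  If L_j divides \<mu>, then writing x^(L_j) = c (g_j - r), with r heavier than L_j, turns
  x^\<mu> g_l into a multiple of g_j minus a multiple of g_l by monomials heavier than \<mu>.
\<close>

lemma det_coeff_reduce:
  fixes \<mu> :: mon
  assumes "0 < m" "j < k" "lead_block m j \<subseteq> keys \<mu>" "\<mu> \<in> monomials_in (vars m k) d"
  obtains c and p q :: "'a::field mpoly"
  where "single \<mu> 1 * det_coeff m k l = mscale c (p * det_coeff m k j - q * det_coeff m k l)"
    and "keys p \<subseteq> monomials_in (vars m k) d"
    and "\<And>\<nu>. \<nu> \<in> keys q \<Longrightarrow> \<nu> \<in> monomials_in (vars m k) d \<and> cost m \<mu> < cost m \<nu>"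
proof -
  define \<mu>' where "\<mu>' = \<mu> - lead_mon m j"
  have \<mu>: "\<mu>' + lead_mon m j = \<mu>" and \<mu>'_in: "\<mu>' \<in> monomials_in (vars m k) (d - m)"
    and d: "d - m + m = d"
    using lead_mon_cofactor[OF assms(3,4)] by (simp_all add: \<mu>'_def)
  obtain c and r :: "'a mpoly" where c: "single (lead_mon m j) 1 = mscale c (det_coeff m k j - r)"
    and r: "keys r \<subseteq> keys (det_coeff m k j :: 'a mpoly) - {lead_mon m j}"
    using single_lead_mon_decomp[OF assms(1,2)] by blast
  show ?thesis
  proof
    have "single \<mu> 1 * det_coeff m k l = single \<mu>' 1 * single (lead_mon m j) (1::'a) * det_coeff m k l"
      by (simp add: mult_single \<mu>(1))
    also have "\<dots> = mscale c (single \<mu>' 1 * (det_coeff m k j - r) * det_coeff m k l)"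
      by (simp only: c mscale_mult_left mscale_mult_right)
    also have "single \<mu>' 1 * (det_coeff m k j - r) * det_coeff m k l =
        (single \<mu>' 1 * det_coeff m k l) * det_coeff m k j - (single \<mu>' 1 * r) * det_coeff m k l"
      by (simp only: right_diff_distrib left_diff_distrib mult_ac)
    finally show "single \<mu> 1 * det_coeff m k l =
        mscale c ((single \<mu>' 1 * det_coeff m k l) * det_coeff m k j -
          (single \<mu>' 1 * r) * det_coeff m k l)" .
    show "keys (single \<mu>' 1 * det_coeff m k l :: 'a mpoly) \<subseteq> monomials_in (vars m k) d"
      using single_one_mult_det_coeff_homogeneous[OF \<mu>'_in] d by simp
  next
    fix \<nu>
    assume "\<nu> \<in> keys (single \<mu>' 1 * r)"
    then obtain \<beta> where \<beta>: "\<beta> \<in> keys (det_coeff m k j :: 'a mpoly)" "\<beta> \<noteq> lead_mon m j" "\<nu> = \<mu>' + \<beta>"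
      using keys_single_one_mult[of \<mu>' r] r by blast
    have \<beta>_in: "\<beta> \<in> monomials_in (vars m k) m"
      using \<beta>(1) det_coeff_homogeneous by blast
    have "\<nu> \<in> monomials_in (vars m k) d"
      using monomials_in_add[OF \<mu>'_in \<beta>_in] by (simp only: d \<beta>(3))
    moreover have "cost m \<mu> < cost m \<nu>"
      using lead_mon_lightest[OF \<beta>(1,2)] by (simp add: \<beta>(3) cost_add flip: \<mu>(1))
    ultimately show "\<nu> \<in> monomials_in (vars m k) d \<and> cost m \<mu> < cost m \<nu>" ..
  qed
qed

lemma single_one_mult_det_coeff_in_span:
  assumes "0 < m" "l < k" "\<mu> \<in> monomials_in (vars m k) d"
  shows "single \<mu> 1 * (det_coeff m k l :: 'a::field mpoly) \<in> vs.span (basis_poly m k ` basis_index m k d)"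
  using assms(2,3)
proof (induction l arbitrary: \<mu> rule: less_induct)
  case (less l)
  let ?B = "vs.span (basis_poly m k ` basis_index m k d) :: 'a mpoly set"
  show ?case
  proof (rule finite_weight_induct[where c = "cost m",
        OF finite_monomials_in[OF finite_vars] less.prems(2)])
    fix \<mu>
    assume \<mu>: "\<mu> \<in> monomials_in (vars m k) d"
      and heavier: "\<And>\<nu>. \<nu> \<in> monomials_in (vars m k) d \<Longrightarrow> cost m \<mu> < cost m \<nu> \<Longrightarrow>
        single \<nu> 1 * det_coeff m k l \<in> ?B"
    show "single \<mu> 1 * det_coeff m k l \<in> ?B"
    proof (cases "\<forall>j<l. \<not> lead_block m j \<subseteq> keys \<mu>")
      case True
      then have "(l, \<mu>) \<in> basis_index m k d"
        using less.prems \<mu> by (simp add: basis_index_def)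
      then show ?thesis
        by (auto simp: basis_poly_def intro!: vs.span_base image_eqI[where x="(l, \<mu>)"])
    next
      case False
      then obtain j where j: "j < l" "lead_block m j \<subseteq> keys \<mu>"
        by blast
      have "j < k"
        using j(1) less.prems(1) by simp
      obtain c and p q :: "'a mpoly" where eq: "single \<mu> 1 * det_coeff m k l =
          mscale c (p * det_coeff m k j - q * (det_coeff m k l :: 'a mpoly))"
        and p: "keys p \<subseteq> monomials_in (vars m k) d"
        and q: "\<And>\<nu>. \<nu> \<in> keys q \<Longrightarrow> \<nu> \<in> monomials_in (vars m k) d \<and> cost m \<mu> < cost m \<nu>"
        by (rule det_coeff_reduce[where 'a='a and l=l, OF assms(1) \<open>j < k\<close> j(2) \<mu>]) blast
      have "p * det_coeff m k j \<in> ?B"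
        by (rule mult_in_span) (use less.IH[OF j(1) \<open>j < k\<close>] p in blast)
      moreover have "q * det_coeff m k l \<in> ?B"
        by (rule mult_in_span) (use heavier q in blast)
      ultimately show ?thesis
        unfolding eq by (intro vs.span_scale vs.span_diff)
    qed
  qed
qed

lemma basis_poly_in_ideal_hom_part:
  assumes "i \<in> basis_index m k d"
  shows "basis_poly m k i \<in> I_ideal m k \<inter> (hom_part m k (d + m) :: 'a::comm_ring_1 mpoly set)"
proof -
  obtain l \<mu> where i: "i = (l, \<mu>)" and "l < k" and \<mu>: "\<mu> \<in> monomials_in (vars m k) d"
    using assms by (auto simp: basis_index_def)
  have "det_coeff m k l \<in> self_module.span (det_coeff m k ` {..<k} :: 'a mpoly set)"
    using \<open>l < k\<close> by (intro self_module.span_base) simp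
  then have "single \<mu> 1 * det_coeff m k l \<in> (I_ideal m k :: 'a mpoly set)"
    unfolding I_ideal_eq_span by (rule self_module.span_scale)
  then show ?thesis
    using single_one_mult_det_coeff_homogeneous[where 'a='a, OF \<mu>]
    by (simp add: i basis_poly_def hom_part_eq)
qed

lemma ideal_hom_part_subset_span:
  assumes "0 < m"
  shows "I_ideal m k \<inter> hom_part m k (d + m) \<subseteq>
    vs.span (basis_poly m k ` basis_index m k d :: 'a::field mpoly set)"
proof
  fix f :: "'a mpoly"
  assume f: "f \<in> I_ideal m k \<inter> hom_part m k (d + m)"
  then obtain A c where A: "finite A" "A \<subseteq> det_coeff m k ` {..<k}" and "f = (\<Sum>g\<in>A. c g * g)"
    by (auto simp: I_ideal_eq_span self_module.span_explicit)
  then have "f = (\<Sum>g\<in>A. restrict_mons (monomials_in (vars m k) (d + m)) (c g * g))"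
    using f by (simp add: hom_part_eq restrict_mons_id flip: restrict_mons_sum)
  also have "\<dots> = (\<Sum>g\<in>A. restrict_mons (monomials_in (vars m k) d) (c g) * g)"
    using A(2) det_coeff_homogeneous by (intro sum.cong refl restrict_mons_mult_homogeneous) blast
  also have "\<dots> \<in> vs.span (basis_poly m k ` basis_index m k d)"
  proof (rule vs.span_sum)
    fix g
    assume "g \<in> A"
    then obtain l where l: "l < k" "g = det_coeff m k l"
      using A(2) by auto
    show "restrict_mons (monomials_in (vars m k) d) (c g) * g \<in>
        vs.span (basis_poly m k ` basis_index m k d)"
      unfolding l(2)
    proof (rule mult_in_span)
      fix \<nu>
      assume "\<nu> \<in> keys (restrict_mons (monomials_in (vars m k) d) (c (det_coeff m k l)))"
      then have "\<nu> \<in> monomials_in (vars m k) d"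
        by (simp add: keys_restrict_mons)
      then show "single \<nu> 1 * det_coeff m k l \<in> vs.span (basis_poly m k ` basis_index m k d)"
        by (rule single_one_mult_det_coeff_in_span[OF assms l(1)])
    qed
  qed
  finally show "f \<in> vs.span (basis_poly m k ` basis_index m k d)" .
qed

lemma ideal_hom_part_eq_span:
  assumes "0 < m"
  shows "I_ideal m k \<inter> hom_part m k (d + m) =
    vs.span (basis_poly m k ` basis_index m k d :: 'a::field mpoly set)"
proof
  have "vs.subspace (I_ideal m k \<inter> hom_part m k (d + m) :: 'a mpoly set)"
    unfolding I_ideal_def hom_part_eq by (intro vs.subspace_inter ideal_gen_subspace subspace_keys_subset)
  then show "vs.span (basis_poly m k ` basis_index m k d) \<subseteq>
      I_ideal m k \<inter> (hom_part m k (d + m) :: 'a mpoly set)"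
    using basis_poly_in_ideal_hom_part by (intro vs.span_minimal image_subsetI)
qed (rule ideal_hom_part_subset_span[OF assms])

lemma basis_lead_eq_imp:
  assumes "(l, \<mu>) \<in> basis_index m k d" "(l', \<mu>') \<in> basis_index m k d" "l \<le> l'"
    and "\<mu> + lead_mon m l = \<mu>' + lead_mon m l'"
  shows "l = l'"
proof (rule ccontr)
  assume "l \<noteq> l'"
  have "lead_block m l \<subseteq> keys \<mu>' \<union> lead_block m l'"
    using arg_cong[OF assms(4), of keys] by (auto simp: keys_add_nat)
  then have "lead_block m l \<subseteq> keys \<mu>'"
    using lead_block_disjoint[OF \<open>l \<noteq> l'\<close>] by blast
  then show False
    using assms(2,3) \<open>l \<noteq> l'\<close> by (auto simp: basis_index_def)
qed

lemma inj_on_basis_lead: "inj_on (basis_lead m) (basis_index m k d)"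
proof (rule inj_onI, clarify)
  fix l \<mu> l' \<mu>'
  assume "(l, \<mu>) \<in> basis_index m k d" "(l', \<mu>') \<in> basis_index m k d"
    and eq: "basis_lead m (l, \<mu>) = basis_lead m (l', \<mu>')"
  then have "l = l'"
    using basis_lead_eq_imp[of l \<mu> m k d l' \<mu>'] basis_lead_eq_imp[of l' \<mu>' m k d l \<mu>]
    by (cases "l \<le> l'") (auto simp: basis_lead_def)
  with eq show "l = l' \<and> \<mu> = \<mu>'"
    by (simp add: basis_lead_def)
qed

definition divisible_mons :: "nat \<Rightarrow> nat \<Rightarrow> nat \<Rightarrow> mon set" where
  "divisible_mons m k n = {\<alpha> \<in> monomials_in (vars m k) n. \<exists>l<k. lead_block m l \<subseteq> keys \<alpha>}"

lemma divisible_monsE: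
  assumes "\<alpha> \<in> divisible_mons m k (d + m)"
  obtains l \<mu> where "(l, \<mu>) \<in> basis_index m k d" "\<alpha> = \<mu> + lead_mon m l"
proof -
  have ex: "\<exists>l. l < k \<and> lead_block m l \<subseteq> keys \<alpha>"
    using assms by (simp add: divisible_mons_def)
  define l where "l = (LEAST l. l < k \<and> lead_block m l \<subseteq> keys \<alpha>)"
  have l: "l < k" "lead_block m l \<subseteq> keys \<alpha>"
    using LeastI_ex[OF ex] by (simp_all add: l_def)
  have least: "\<not> lead_block m j \<subseteq> keys \<alpha>" if "j < l" for j
  proof -
    have "\<not> (j < k \<and> lead_block m j \<subseteq> keys \<alpha>)"
      using that unfolding l_def by (rule not_less_Least)
    then show ?thesis
      using that l(1) by simp
  qed
  have "\<alpha> \<in> monomials_in (vars m k) (d + m)"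
    using assms by (simp add: divisible_mons_def)
  from lead_mon_cofactor[OF l(2) this] have
    "\<alpha> - lead_mon m l + lead_mon m l = \<alpha>" "\<alpha> - lead_mon m l \<in> monomials_in (vars m k) d"
    by simp_all
  moreover have "keys (\<alpha> - lead_mon m l) \<subseteq> keys \<alpha>"
    by (auto simp: in_keys_iff lookup_minus)
  then have "\<forall>j<l. \<not> lead_block m j \<subseteq> keys (\<alpha> - lead_mon m l)"
    using least by blast
  ultimately show thesis
    using that[of l "\<alpha> - lead_mon m l"] l(1) by (simp add: basis_index_def)
qed

lemma basis_lead_image: "basis_lead m ` basis_index m k d = divisible_mons m k (d + m)"
proof (intro equalityI subsetI)
  fix \<alpha>
  assume "\<alpha> \<in> basis_lead m ` basis_index m k d"
  then obtain l \<mu> where \<alpha>: "\<alpha> = \<mu> + lead_mon m l" and "l < k" "\<mu> \<in> monomials_in (vars m k) d"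
    by (auto simp: basis_lead_def basis_index_def)
  then have "\<alpha> \<in> monomials_in (vars m k) (d + m)"
    using monomials_in_add lead_mon_in_monomials by blast
  then show "\<alpha> \<in> divisible_mons m k (d + m)"
    using \<open>l < k\<close> by (auto simp: divisible_mons_def \<alpha> keys_add_nat)
next
  fix \<alpha>
  assume "\<alpha> \<in> divisible_mons m k (d + m)"
  then obtain l \<mu> where "(l, \<mu>) \<in> basis_index m k d" "\<alpha> = \<mu> + lead_mon m l"
    by (rule divisible_monsE)
  then show "\<alpha> \<in> basis_lead m ` basis_index m k d"
    by (force simp: basis_lead_def)
qed

lemma dim_ideal_hom_part:
  assumes "0 < m"
  shows "vs.dim (I_ideal m k \<inter> hom_part m k (d + m) :: 'a::field mpoly set) =
    card (divisible_mons m k (d + m))"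
proof -
  have "vs.dim (vs.span (basis_poly m k ` basis_index m k d) :: 'a mpoly set) = card (basis_index m k d)"
  proof (rule dim_span_triangular[where lt = "basis_lead m" and C = "cost m"])
    show "inj_on (basis_lead m) (basis_index m k d)"
      by (rule inj_on_basis_lead)
    fix i
    assume "i \<in> basis_index m k d"
    then obtain l \<mu> where i: "i = (l, \<mu>)" "l < k"
      by (auto simp: basis_index_def)
    show "lookup (basis_poly m k i :: 'a mpoly) (basis_lead m i) \<noteq> 0"
      using lookup_det_coeff_lead_mon_nonzero[OF assms i(2), where 'a='a]
      by (simp add: i basis_poly_def basis_lead_def lookup_single_one_mult)
    fix \<beta>
    assume "\<beta> \<in> keys (basis_poly m k i :: 'a mpoly)" "\<beta> \<noteq> basis_lead m i"
    then obtain \<gamma> where "\<gamma> \<in> keys (det_coeff m k l :: 'a mpoly)" "\<gamma> \<noteq> lead_mon m l" "\<beta> = \<mu> + \<gamma>"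
      using keys_single_one_mult[of \<mu> "det_coeff m k l :: 'a mpoly"]
      by (auto simp: i basis_poly_def basis_lead_def)
    then show "cost m (basis_lead m i) < cost m \<beta>"
      using lead_mon_lightest by (simp add: i basis_lead_def cost_add)
  qed
  then show ?thesis
    using bij_betw_same_card[OF bij_betw_imageI[OF inj_on_basis_lead basis_lead_image]]
    by (simp add: ideal_hom_part_eq_span[OF assms])
qed

definition standard_mons :: "nat \<Rightarrow> nat \<Rightarrow> nat \<Rightarrow> mon set" where
  "standard_mons m k n = {\<alpha> \<in> monomials_in (vars m k) n. \<forall>l<k. \<not> lead_block m l \<subseteq> keys \<alpha>}"

lemma hilbert_fun_eq_card_standard_mons:
  assumes "0 < m" "m \<le> n"
  shows "hilbert_fun TYPE('a::field) m k n = card (standard_mons m k n)"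
proof -
  have "standard_mons m k n = monomials_in (vars m k) n - divisible_mons m k n"
    by (auto simp: standard_mons_def divisible_mons_def)
  moreover have "divisible_mons m k n \<subseteq> monomials_in (vars m k) n"
    by (auto simp: divisible_mons_def)
  moreover have "n = (n - m) + m"
    using assms(2) by simp
  ultimately show ?thesis
    unfolding hilbert_fun_def dim_hom_part
    by (metis dim_ideal_hom_part[OF assms(1)] card_Diff_subset finite_monomials_in finite_subset
        finite_vars)
qed

section \<open>Counting the standard monomials\<close>

definition block_free_supports :: "nat \<Rightarrow> nat \<Rightarrow> (nat \<times> nat \<times> nat) set set" where
  "block_free_supports m k = {A. A \<subseteq> vars m k \<and> (\<forall>l<k. \<not> lead_block m l \<subseteq> A)}"

lemma finite_block_free_supports: "finite (block_free_supports m k)"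
  by (rule finite_subset[of _ "Pow (vars m k)"]) (auto simp: block_free_supports_def)

lemma card_standard_mons_eq_sum:
  assumes "1 \<le> n"
  shows "card (standard_mons m k n) = (\<Sum>s\<le>card (vars m k).
    card {A \<in> block_free_supports m k. card A = s} * (if s = 0 then 0 else (n - 1) choose (s - 1)))"
proof -
  let ?w = "\<lambda>s. if s = 0 then 0 else (n - 1) choose (s - 1)"
  have fin: "finite A" if "A \<in> block_free_supports m k" for A
    using that finite_subset[OF _ finite_vars] by (auto simp: block_free_supports_def)
  have "standard_mons m k n = (\<Union>A\<in>block_free_supports m k. monomials_with_support A n)"
    by (auto simp: standard_mons_def block_free_supports_def monomials_with_support_def monomials_in_def)
  moreover have "finite (monomials_with_support A n)" if "A \<in> block_free_supports m k" for A
    using finite_monomials_in[OF fin[OF that], of n]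
    by (rule rev_finite_subset) (auto simp: monomials_with_support_def monomials_in_def)
  then have "card (\<Union>A\<in>block_free_supports m k. monomials_with_support A n) =
      (\<Sum>A\<in>block_free_supports m k. card (monomials_with_support A n))"
    by (intro card_UN_disjoint) (auto simp: finite_block_free_supports monomials_with_support_def)
  ultimately have "card (standard_mons m k n) =
      (\<Sum>A\<in>block_free_supports m k. card (monomials_with_support A n))"
    by simp
  also have "\<dots> = (\<Sum>A\<in>block_free_supports m k. ?w (card A))"
    using fin assms by (intro sum.cong refl) (simp add: card_monomials_with_support)
  also have "\<dots> = (\<Sum>s\<le>card (vars m k). \<Sum>A\<in>{A \<in> block_free_supports m k. card A = s}. ?w (card A))"
    by (rule sum.group[symmetric])
      (auto simp: finite_block_free_supports block_free_supports_def intro: card_mono)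
  also have "\<dots> = (\<Sum>s\<le>card (vars m k). card {A \<in> block_free_supports m k. card A = s} * ?w s)"
    by (intro sum.cong refl) simp
  finally show ?thesis .
qed

definition card_gf :: "'v set \<Rightarrow> ('v set \<Rightarrow> bool) \<Rightarrow> nat poly" where
  "card_gf X P = (\<Sum>A | A \<subseteq> X \<and> P A. monom 1 (card A))"

lemma coeff_card_gf:
  assumes "finite X"
  shows "coeff (card_gf X P) s = card {A. A \<subseteq> X \<and> P A \<and> card A = s}"
proof -
  have "coeff (card_gf X P) s = (\<Sum>A | A \<subseteq> X \<and> P A. if card A = s then 1 else 0)"
    unfolding card_gf_def coeff_sum coeff_monom by (rule sum.cong) auto
  also have "\<dots> = (\<Sum>A \<in> {A. A \<subseteq> X \<and> P A \<and> card A = s}. 1)"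
    using assms by (simp add: sum.inter_filter[symmetric] conj_assoc)
  finally show ?thesis
    by simp
qed

lemma card_gf_cong: "(\<And>A. A \<subseteq> X \<Longrightarrow> P A = Q A) \<Longrightarrow> card_gf X P = card_gf X Q"
  unfolding card_gf_def by (rule sum.cong) auto

lemma card_gf_Un:
  assumes "finite X" "finite Y" "X \<inter> Y = {}"
  shows "card_gf (X \<union> Y) (\<lambda>A. P (A \<inter> X) \<and> Q (A \<inter> Y)) = card_gf X P * card_gf Y Q"
proof -
  let ?S1 = "{A. A \<subseteq> X \<and> P A}" and ?S2 = "{B. B \<subseteq> Y \<and> Q B}"
  let ?S = "{A. A \<subseteq> X \<union> Y \<and> P (A \<inter> X) \<and> Q (A \<inter> Y)}"
  have "card_gf X P * card_gf Y Q = (\<Sum>A\<in>?S1. \<Sum>B\<in>?S2. monom 1 (card A + card B))"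
    by (simp add: card_gf_def sum_product mult_monom)
  also have "\<dots> = (\<Sum>p\<in>?S1 \<times> ?S2. monom 1 (card (fst p \<union> snd p)))"
  proof -
    have "card A + card B = card (A \<union> B)" if "A \<in> ?S1" "B \<in> ?S2" for A B
      using that assms by (subst card_Un_disjoint) (auto intro: finite_subset)
    then show ?thesis
      by (simp add: sum.cartesian_product split_def)
  qed
  also have "\<dots> = (\<Sum>A\<in>?S. monom 1 (card A))"
  proof (rule sum.reindex_bij_betw[where h = "\<lambda>p. fst p \<union> snd p", unfolded comp_def])
    show "bij_betw (\<lambda>p. fst p \<union> snd p) (?S1 \<times> ?S2) ?S"
    proof (rule bij_betwI[where g = "\<lambda>A. (A \<inter> X, A \<inter> Y)"])
      show "(\<lambda>p. fst p \<union> snd p) \<in> ?S1 \<times> ?S2 \<rightarrow> ?S"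
      proof
        fix p
        assume "p \<in> ?S1 \<times> ?S2"
        moreover have "(fst p \<union> snd p) \<inter> X = fst p" "(fst p \<union> snd p) \<inter> Y = snd p"
          using calculation assms(3) by auto
        ultimately show "fst p \<union> snd p \<in> ?S"
          by auto
      qed
    qed (use assms(3) in auto)
  qed
  finally show ?thesis
    by (simp add: card_gf_def)
qed

lemma card_gf_proper_subsets:
  assumes "finite X"
  shows "card_gf X (\<lambda>A. A \<noteq> X) = (\<Sum>j<card X. monom (card X choose j) j)"
proof (rule poly_eqI)
  fix s
  have "{A. A \<subseteq> X \<and> A \<noteq> X \<and> card A = s} = (if s < card X then {A. A \<subseteq> X \<and> card A = s} else {})"
    using assms psubset_card_mono[of X] by (auto simp: psubset_eq)
  then show "coeff (card_gf X (\<lambda>A. A \<noteq> X)) s = coeff (\<Sum>j<card X. monom (card X choose j) j) s"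
    using assms by (simp add: coeff_card_gf coeff_sum n_subsets)
qed

lemma card_gf_all:
  assumes "finite X"
  shows "card_gf X (\<lambda>_. True) = [:1, 1:] ^ card X"
proof (rule poly_eqI)
  fix s
  have "coeff ([:1, 1:] ^ card X :: nat poly) s = card X choose s"
  proof (cases "s \<le> card X")
    case False
    then have "degree ([:1, 1:] ^ card X :: nat poly) < s"
      using degree_power_le[of "[:1, 1:] :: nat poly" "card X"] by simp
    then show ?thesis
      using False by (simp add: coeff_eq_0)
  qed (simp add: coeff_linear_poly_power)
  then show "coeff (card_gf X (\<lambda>_. True)) s = coeff ([:1, 1:] ^ card X) s"
    using assms by (simp add: coeff_card_gf n_subsets)
qed

definition block_union :: "nat \<Rightarrow> nat \<Rightarrow> (nat \<times> nat \<times> nat) set" where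
  "block_union m t = (\<Union>l<t. lead_block m l)"

lemma finite_block_union [simp]: "finite (block_union m t)"
  by (simp add: block_union_def)

lemma card_block_union: "card (block_union m t) = t * m"
  unfolding block_union_def by (subst card_UN_disjoint) (auto dest: lead_block_disjoint)

lemma block_union_subset_vars: "block_union m k \<subseteq> vars m k"
  using lead_block_subset_vars by (auto simp: block_union_def)

lemma card_gf_block_free:
  "card_gf (block_union m t) (\<lambda>A. \<forall>l<t. \<not> lead_block m l \<subseteq> A) = (\<Sum>j<m. monom (m choose j) j) ^ t"
proof (induction t)
  case 0
  have "{A. A \<subseteq> block_union m 0} = {{}}"
    by (auto simp: block_union_def)
  then show ?case
    by (simp add: card_gf_def monom_0 one_pCons)
next
  case (Suc t)
  have sub: "lead_block m l \<subseteq> block_union m t" if "l < t" for l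
    using that by (auto simp: block_union_def)
  have "lead_block m l \<inter> lead_block m t = {}" if "l < t" for l
    using that by (intro lead_block_disjoint) simp
  then have disj: "block_union m t \<inter> lead_block m t = {}"
    unfolding block_union_def by blast
  have "(\<forall>l<Suc t. \<not> lead_block m l \<subseteq> A) \<longleftrightarrow>
      (\<forall>l<t. \<not> lead_block m l \<subseteq> A \<inter> block_union m t) \<and> A \<inter> lead_block m t \<noteq> lead_block m t" for A
    using sub by (auto simp: less_Suc_eq)
  moreover have "block_union m (Suc t) = block_union m t \<union> lead_block m t"
    by (auto simp: block_union_def less_Suc_eq)
  ultimately have "card_gf (block_union m (Suc t)) (\<lambda>A. \<forall>l<Suc t. \<not> lead_block m l \<subseteq> A) =
      card_gf (block_union m t \<union> lead_block m t)
        (\<lambda>A. (\<forall>l<t. \<not> lead_block m l \<subseteq> A \<inter> block_union m t) \<and> A \<inter> lead_block m t \<noteq> lead_block m t)"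
    by simp
  also have "\<dots> = (\<Sum>j<m. monom (m choose j) j) ^ t * (\<Sum>j<m. monom (m choose j) j)"
    using card_gf_Un[OF _ _ disj, where P = "\<lambda>B. \<forall>l<t. \<not> lead_block m l \<subseteq> B"
        and Q = "\<lambda>B. B \<noteq> lead_block m t"]
    by (simp add: Suc.IH card_gf_proper_subsets)
  finally show ?case
    by (simp add: mult.commute)
qed

definition support_gf :: "nat \<Rightarrow> nat \<Rightarrow> nat poly" where
  "support_gf m k = (\<Sum>j<m. monom (m choose j) j) ^ k * [:1, 1:] ^ (k * (m\<^sup>2 - m))"

lemma card_block_free_supports:
  "card {A \<in> block_free_supports m k. card A = s} = coeff (support_gf m k) s"
proof -
  let ?R = "vars m k - block_union m k"
  have vars: "vars m k = block_union m k \<union> ?R"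
    using block_union_subset_vars by auto
  have "card ?R = k * (m\<^sup>2 - m)"
    using card_Diff_subset[OF finite_block_union block_union_subset_vars]
    by (simp add: card_vars card_block_union power2_eq_square diff_mult_distrib2 algebra_simps)
  then have "card_gf (block_union m k \<union> ?R)
      (\<lambda>A. (\<forall>l<k. \<not> lead_block m l \<subseteq> A \<inter> block_union m k) \<and> True) = support_gf m k"
    by (subst card_gf_Un) (auto simp: card_gf_block_free card_gf_all support_gf_def)
  moreover have "card_gf (vars m k) (\<lambda>A. \<forall>l<k. \<not> lead_block m l \<subseteq> A) =
      card_gf (block_union m k \<union> ?R) (\<lambda>A. (\<forall>l<k. \<not> lead_block m l \<subseteq> A \<inter> block_union m k) \<and> True)"
    unfolding vars[symmetric] by (rule card_gf_cong) (auto simp: block_union_def)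
  ultimately show ?thesis
    by (simp add: coeff_card_gf[symmetric] block_free_supports_def conj_assoc)
qed

lemma degree_support_gf:
  assumes "0 < m"
  shows "degree (support_gf m k) \<le> k * (m\<^sup>2 - 1)"
proof -
  have "degree (\<Sum>j<m. monom (m choose j) j :: nat poly) \<le> m - 1"
    by (rule degree_sum_le) (auto intro: order.trans[OF degree_monom_le])
  then have "degree (support_gf m k) \<le> (m - 1) * k + 1 * (k * (m\<^sup>2 - m))"
    unfolding support_gf_def
    by (intro order.trans[OF degree_mult_le] add_mono order.trans[OF degree_power_le]
        mult_right_mono) simp_all
  also have "\<dots> = k * (m\<^sup>2 - 1)"
    using assms by (simp add: power2_eq_square algebra_simps diff_mult_distrib2)
  finally show ?thesis .
qed

lemma card_standard_mons:
  assumes "0 < m" "1 \<le> n"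
  shows "card (standard_mons m k n) = (\<Sum>i<k * (m\<^sup>2 - 1). fcoeff m k i * ((n - 1) choose i))"
proof -
  let ?V = "card (vars m k)"
  have fcoeff_eq: "fcoeff m k i = coeff (support_gf m k) (Suc i)" for i
    by (simp add: fcoeff_def support_gf_def)
  have "card (standard_mons m k n) =
      (\<Sum>s<Suc ?V. coeff (support_gf m k) s * (if s = 0 then 0 else (n - 1) choose (s - 1)))"
    by (simp add: card_standard_mons_eq_sum[OF assms(2)] card_block_free_supports lessThan_Suc_atMost)
  also have "\<dots> = (\<Sum>i<?V. fcoeff m k i * ((n - 1) choose i))"
    by (subst sum.lessThan_Suc_shift) (simp add: fcoeff_eq)
  also have "\<dots> = (\<Sum>i<k * (m\<^sup>2 - 1). fcoeff m k i * ((n - 1) choose i))"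
  proof (rule sum.mono_neutral_right)
    show "{..<k * (m\<^sup>2 - 1)} \<subseteq> {..<?V}"
      by (auto simp: card_vars power2_eq_square algebra_simps)
    show "\<forall>i\<in>{..<?V} - {..<k * (m\<^sup>2 - 1)}. fcoeff m k i * ((n - 1) choose i) = 0"
      using degree_support_gf[OF assms(1), of k]
      by (auto simp: fcoeff_eq coeff_eq_0)
  qed simp
  finally show ?thesis .
qed

theorem proposition3p8:
  fixes m k :: nat
  assumes "m \<ge> 2" and "k \<ge> 1"
  shows "\<exists>N. \<forall>n\<ge>N. hilbert_fun TYPE('a::alg_closed_field) m k n =
            (\<Sum>i<k * (m^2 - 1). fcoeff m k i * ((n - 1) choose i))"
proof (intro exI allI impI)
  fix n
  assume "m \<le> n"
  moreover have "0 < m"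
    using assms(1) by simp
  ultimately show "hilbert_fun TYPE('a) m k n = (\<Sum>i<k * (m^2 - 1). fcoeff m k i * ((n - 1) choose i))"
    by (simp add: hilbert_fun_eq_card_standard_mons card_standard_mons)
qed

end
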